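(* Let $n\ge2$ and $\nu\in\mathcal{F}_{C_n}$, writing $\nu(\alpha)=(\nu(\alpha)_1,\dots,\nu(\alpha)_{n+1})$. Then the map $\mathsf{b}$ from formulas to $\{0,1\}$ given by $\mathsf{b}(\alpha)=\nu(\alpha)_1$ is a $C_n$-bivaluation, and $\mathsf{b}(\alpha)=1$ iff $\nu(\alpha)\in D_n$.
   Context: $\Sigma$ has unary $\neg$ and binary $\wedge,\vee,\to$; formulas over a denumerable set of variables; $\alpha^0=\alpha$, $\alpha^{k+1}=\neg(\alpha^k\wedge\neg\alpha^k)$. A $C_n$-bivaluation is a map $\mathsf{b}$ from formulas to $\{0,1\}$ such that: (B1) $\mathsf{b}(\alpha\wedge\beta)=1$ iff $\mathsf{b}(\alpha)=\mathsf{b}(\beta)=1$; (B2) $\mathsf{b}(\alpha\vee\beta)=1$ iff $\mathsf{b}(\alpha)=1$ or $\mathsf{b}(\beta)=1$; (B3) $\mathsf{b}(\alpha\to\beta)=1$ iff $\mathsf{b}(\alpha)=0$ or $\mathsf{b}(\beta)=1$; (B4) $\mathsf{b}(\alpha)=0$ implies $\mathsf{b}(\neg\alpha)=1$; (B5) $\mathsf{b}(\neg\neg\alpha)=1$ implies $\mathsf{b}(\alpha)=1$; (B6)$_n$ $\mathsf{b}(\alpha^{n-1})=\mathsf{b}(\neg(\alpha^{n-1}))$ iff $\mathsf{b}(\alpha^n)=0$; (B7) $\mathsf{b}(\alpha)=\mathsf{b}(\neg\alpha)$ iff $\mathsf{b}(\neg(\alpha^1))=1$; (B8) if $\mathsf{b}(\alpha)\ne\mathsf{b}(\neg\alpha)$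 and $\mathsf{b}(\beta)\ne\mathsf{b}(\neg\beta)$ then $\mathsf{b}(\alpha\#\beta)\ne\mathsf{b}(\neg(\alpha\#\beta))$ for $\#\in\{\wedge,\vee,\to\}$. Fix $n\ge2$. $B_n=\{z\in\{0,1\}^{n+1}:(z_1\wedge\dots\wedge z_k)\vee z_{k+1}=1\text{ for all }1\le k\le n\}$, with elements $T_n=(1,0,1,\dots,1)$, $t^n_i$ ($0\le i\le n-2$) having $z_1=z_2=1$ and a single $0$ at coordinate $i+3$, $t^n_{n-1}=(1,\dots,1)$, $F_n=(0,1,\dots,1)$. $D_n=\{z:z_1=1\}$, $Boo_n=\{T_n,F_n\}$, $I_n=B_n\setminus Boo_n$. $\mathcal{A}_{C_n}$ on $B_n$: $\tilde\neg z=\{w\in B_n:w_1=z_2,\ w_2\le z_1\}$; for $\#\in\{\wedge,\vee,\to\}$, $z\tilde\#w=\{u\in Boo_n:u_1=z_1\#w_1\}$ if $z,w\in Boo_n$, else $\{u\in B_n:u_1=z_1\#w_1\}$. A valuation is $\nu$ with $\nu(\neg\alpha)\in\tilde\neg\nu(\alpha)$, $\nu(\alpha\#\beta)\in\nu(\alpha)\tilde\#\nu(\beta)$. $\mathcal{F}_{C_n}$: valuations with $\nu(\alpha)=t^n_0\Rightarrow\nu(\alpha\wedge\neg\alpha)=T_n$, and for $1\le k\le n-1$, $\nu(\alpha)=t^n_k\Rightarrow(\nu(\alpha\wedge\neg\alpha)\in I_n$ and $\nu(\alpha^1)=t^n_{k-1})$. *)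

theory Defs
  imports Main
begin

datatype fm = Var nat | Neg fm | And fm fm | Or fm fm | Imp fm fm

fun pw :: "fm \<Rightarrow> nat \<Rightarrow> fm" where
  "pw a 0 = a"
| "pw a (Suc k) = Neg (And (pw a k) (Neg (pw a k)))"

definition cn_bivaluation :: "nat \<Rightarrow> (fm \<Rightarrow> bool) \<Rightarrow> bool" where
  "cn_bivaluation n b \<longleftrightarrow>
     (\<forall>a c. b (And a c) \<longleftrightarrow> b a \<and> b c) \<and>
     (\<forall>a c. b (Or a c) \<longleftrightarrow> b a \<or> b c) \<and>
     (\<forall>a c. b (Imp a c) \<longleftrightarrow> \<not> b a \<or> b c) \<and>
     (\<forall>a. \<not> b a \<longrightarrow> b (Neg a)) \<and>
     (\<forall>a. b (Neg (Neg a)) \<longrightarrow> b a) \<and>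
     (\<forall>a. (b (pw a (n - 1)) = b (Neg (pw a (n - 1)))) \<longleftrightarrow> \<not> b (pw a n)) \<and>
     (\<forall>a. (b a = b (Neg a)) \<longleftrightarrow> b (Neg (pw a 1))) \<and>
     (\<forall>a c. b a \<noteq> b (Neg a) \<and> b c \<noteq> b (Neg c) \<longrightarrow>
         b (And a c) \<noteq> b (Neg (And a c)) \<and>
         b (Or a c) \<noteq> b (Neg (Or a c)) \<and>
         b (Imp a c) \<noteq> b (Neg (Imp a c)))"

text \<open>Elements of {0,1}^(n+1) are bool lists of length n+1; coordinate i (1-based) is z ! (i-1).\<close>
definition coord :: "bool list \<Rightarrow> nat \<Rightarrow> bool" where
  "coord z i = z ! (i - 1)"

definition Bn :: "nat \<Rightarrow> bool list set" where
  "Bn n = {z. length z = n + 1 \<and>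
              (\<forall>k \<in> {1..n}. (\<forall>j \<in> {1..k}. coord z j) \<or> coord z (k + 1))}"

definition Tn :: "nat \<Rightarrow> bool list" where
  "Tn n = [True, False] @ replicate (n - 1) True"

definition Fn :: "nat \<Rightarrow> bool list" where
  "Fn n = False # replicate n True"

definition tn :: "nat \<Rightarrow> nat \<Rightarrow> bool list" where
  "tn n i = (if i \<le> n - 2 then map (\<lambda>j. j \<noteq> i + 3) [1..<n + 2]
             else replicate (n + 1) True)"

definition Dn :: "nat \<Rightarrow> bool list set" where
  "Dn n = {z \<in> Bn n. coord z 1}"

definition Boo :: "nat \<Rightarrow> bool list set" where
  "Boo n = {Tn n, Fn n}"

definition In :: "nat \<Rightarrow> bool list set" where
  "In n = Bn n - Boo n"

definition neg_op :: "nat \<Rightarrow> bool list \<Rightarrow> bool list set" where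
  "neg_op n z = {w \<in> Bn n. coord w 1 = coord z 2 \<and> coord w 2 \<le> coord z 1}"

definition bin_op :: "nat \<Rightarrow> (bool \<Rightarrow> bool \<Rightarrow> bool) \<Rightarrow> bool list \<Rightarrow> bool list \<Rightarrow> bool list set" where
  "bin_op n f z w =
     (if z \<in> Boo n \<and> w \<in> Boo n then {u \<in> Boo n. coord u 1 = f (coord z 1) (coord w 1)}
      else {u \<in> Bn n. coord u 1 = f (coord z 1) (coord w 1)})"

definition valuation :: "nat \<Rightarrow> (fm \<Rightarrow> bool list) \<Rightarrow> bool" where
  "valuation n v \<longleftrightarrow>
     (\<forall>a. v a \<in> Bn n) \<and>
     (\<forall>a. v (Neg a) \<in> neg_op n (v a)) \<and>
     (\<forall>a c. v (And a c) \<in> bin_op n (\<and>) (v a) (v c)) \<and>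
     (\<forall>a c. v (Or a c) \<in> bin_op n (\<or>) (v a) (v c)) \<and>
     (\<forall>a c. v (Imp a c) \<in> bin_op n (\<longrightarrow>) (v a) (v c))"

definition F_Cn :: "nat \<Rightarrow> (fm \<Rightarrow> bool list) set" where
  "F_Cn n = {v. valuation n v \<and>
     (\<forall>a. v a = tn n 0 \<longrightarrow> v (And a (Neg a)) = Tn n) \<and>
     (\<forall>a k. 1 \<le> k \<and> k \<le> n - 1 \<and> v a = tn n k \<longrightarrow>
          v (And a (Neg a)) \<in> In n \<and> v (pw a 1) = tn n (k - 1))}"

end

theory Submission
  imports Defs
begin

text \<open>In every element of \<open>B\<^sub>n\<close> a \<open>0\<close> can only be followed by \<open>1\<close>s, so an element has at most one
  \<open>0\<close>: it is \<open>F\<^sub>n\<close>, \<open>T\<^sub>n\<close> or some \<open>t\<^sup>n\<^sub>k\<close> according to where that \<open>0\<close> sits. Hence the first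
  coordinate of a valuation is two-valued and respects the connectives, and \<open>\<nu>(\<alpha>) \<in> Boo\<^sub>n\<close> exactly
  when \<open>\<alpha>\<close> and \<open>\<not>\<alpha>\<close> get different first coordinates. The conditions defining \<open>\<F>\<^sub>C\<^sub>n\<close> say that
  \<open>\<alpha> \<mapsto> \<alpha>\<^sup>1\<close> sends a Boolean value to \<open>T\<^sub>n\<close>, \<open>t\<^sup>n\<^sub>0\<close> to \<open>F\<^sub>n\<close> and \<open>t\<^sup>n\<^sub>k\<close> to \<open>t\<^sup>n\<^sub>k\<^sub>-\<^sub>1\<close>; so \<open>\<nu>(\<alpha>\<^sup>n\<^sup>-\<^sup>1)\<close> is
  Boolean or \<open>t\<^sup>n\<^sub>0\<close>, which yields (B6), and (B7) follows because the second coordinate of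
  \<open>\<nu>(\<alpha>\<^sup>1)\<close> is \<open>0\<close> exactly when \<open>\<nu>(\<alpha>)\<close> is Boolean.\<close>

text \<open>The vector whose only \<open>0\<close> is at list position \<open>m\<close>, i.e.\ at coordinate \<open>m + 1\<close>;
  for \<open>m = n + 1\<close> it is the all-ones vector.\<close>
definition zero_at :: "nat \<Rightarrow> nat \<Rightarrow> bool list" where
  "zero_at n m = map (\<lambda>j. j \<noteq> m) [0..<n + 1]"

lemma coord_zero_at:
  assumes "1 \<le> i" "i \<le> n + 1"
  shows "coord (zero_at n m) i \<longleftrightarrow> i \<noteq> m + 1"
  using assms by (auto simp: zero_at_def coord_def nth_upt simp del: upt_Suc)

lemma Fn_eq_zero_at: "Fn n = zero_at n 0"
  by (rule nth_equalityI) (auto simp: Fn_def zero_at_def nth_Cons split: nat.split simp del: upt_Suc)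

lemma Tn_eq_zero_at:
  assumes "n \<ge> 1"
  shows "Tn n = zero_at n 1"
  by (rule nth_equalityI)
     (use assms in \<open>auto simp: Tn_def zero_at_def nth_Cons nth_append split: nat.split simp del: upt_Suc\<close>)

lemma tn_eq_zero_at:
  assumes "n \<ge> 2" "k \<le> n - 1"
  shows "tn n k = zero_at n (k + 2)"
  by (rule nth_equalityI) (use assms in \<open>auto simp: tn_def zero_at_def nth_Cons split: nat.split simp del: upt_Suc\<close>)

lemma Bn_false_before_true:
  assumes "z \<in> Bn n" "i < j" "j \<le> n" "\<not> z ! i"
  shows "z ! j"
proof -
  have "(\<forall>l \<in> {1..j}. coord z l) \<or> coord z (j + 1)"
    using assms(1-3) by (simp add: Bn_def)
  moreover have "\<not> coord z (i + 1)"
    using assms(4) by (simp add: coord_def)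
  moreover have "i + 1 \<in> {1..j}"
    using assms(2) by simp
  ultimately have "coord z (j + 1)"
    by blast
  then show ?thesis
    by (simp add: coord_def)
qed

lemma Bn_eq_zero_at:
  assumes "z \<in> Bn n"
  obtains m where "m \<le> n + 1" "z = zero_at n m"
proof -
  have len: "length z = n + 1"
    using assms by (simp add: Bn_def)
  show ?thesis
  proof (cases "\<forall>i < n + 1. z ! i")
    case True
    then have "z = zero_at n (n + 1)"
      using len by (intro nth_equalityI) (auto simp: zero_at_def simp del: upt_Suc)
    then show ?thesis by (intro that) simp_all
  next
    case False
    then obtain m where m: "m < n + 1" "\<not> z ! m" by blast
    have "z ! i" if "i < n + 1" "i \<noteq> m" for i
      using that m Bn_false_before_true[OF assms, of m i] Bn_false_before_true[OF assms, of i m]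
      by (cases "i < m") auto
    then have "z = zero_at n m"
      using len m by (intro nth_equalityI) (auto simp: zero_at_def simp del: upt_Suc)
    then show ?thesis using m(1) by (intro that) simp_all
  qed
qed

lemma Bn_cases:
  assumes "z \<in> Bn n" "n \<ge> 2"
  obtains "z = Fn n" | "z = Tn n" | k where "k \<le> n - 1" "z = tn n k"
proof -
  obtain m where m: "m \<le> n + 1" "z = zero_at n m"
    using Bn_eq_zero_at[OF assms(1)] .
  consider "m = 0" | "m = 1" | "m \<ge> 2" by linarith
  then show ?thesis
  proof cases
    case 3
    moreover have "m - 2 + 2 = m"
      using 3 by simp
    ultimately have "z = tn n (m - 2)" "m - 2 \<le> n - 1"
      using m assms(2) tn_eq_zero_at[of n "m - 2"] by auto
    then show ?thesis using that by blast
  qed (use m assms(2) that Fn_eq_zero_at Tn_eq_zero_at in auto)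
qed

lemma coord_Fn: "\<not> coord (Fn n) 1" "n \<ge> 1 \<Longrightarrow> coord (Fn n) 2"
  by (simp_all add: Fn_eq_zero_at coord_zero_at)

lemma coord_Tn: "n \<ge> 1 \<Longrightarrow> coord (Tn n) 1" "n \<ge> 1 \<Longrightarrow> \<not> coord (Tn n) 2"
  by (simp_all add: Tn_eq_zero_at coord_zero_at)

lemma coord_tn:
  assumes "n \<ge> 2" "k \<le> n - 1"
  shows "coord (tn n k) 1" "coord (tn n k) 2"
  using assms by (simp_all add: tn_eq_zero_at coord_zero_at)

lemma tn_notin_Boo:
  assumes "n \<ge> 2" "k \<le> n - 1"
  shows "tn n k \<notin> Boo n"
  using coord_tn[OF assms] coord_Fn(1) coord_Tn(2) assms(1) by (auto simp: Boo_def)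

lemma Bn_coord_1_or_2:
  assumes "z \<in> Bn n" "n \<ge> 1"
  shows "coord z 1 \<or> coord z 2"
proof -
  have "1 \<in> {1..n}"
    using assms(2) by simp
  then have "(\<forall>l \<in> {1..1}. coord z l) \<or> coord z (1 + 1)"
    using assms(1) unfolding Bn_def by blast
  then show ?thesis by (simp add: numeral_2_eq_2)
qed

lemma Bn_eq_Fn:
  assumes "z \<in> Bn n" "\<not> coord z 1"
  shows "z = Fn n"
proof -
  obtain m where m: "m \<le> n + 1" "z = zero_at n m"
    using Bn_eq_zero_at[OF assms(1)] .
  then have "m = 0"
    using assms(2) coord_zero_at[of 1 n m] by auto
  then show ?thesis
    using m by (simp add: Fn_eq_zero_at)
qed

lemma Bn_eq_Tn:
  assumes "z \<in> Bn n" "n \<ge> 1" "coord z 1" "\<not> coord z 2"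
  shows "z = Tn n"
proof -
  obtain m where m: "m \<le> n + 1" "z = zero_at n m"
    using Bn_eq_zero_at[OF assms(1)] .
  then have "m = 1"
    using assms(2,4) coord_zero_at[of 2 n m] by auto
  then show ?thesis
    using m assms(2) by (simp add: Tn_eq_zero_at)
qed

lemma Bn_in_Boo_iff:
  assumes "z \<in> Bn n" "n \<ge> 1"
  shows "z \<in> Boo n \<longleftrightarrow> coord z 1 \<noteq> coord z 2"
proof
  assume "z \<in> Boo n"
  then show "coord z 1 \<noteq> coord z 2"
    using coord_Fn coord_Tn assms(2) by (auto simp: Boo_def)
next
  assume "coord z 1 \<noteq> coord z 2"
  then have "z = Fn n \<or> z = Tn n"
    using Bn_eq_Fn[OF assms(1)] Bn_eq_Tn[OF assms] by blast
  then show "z \<in> Boo n"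
    by (auto simp: Boo_def)
qed

lemma bin_op_coord_1: "u \<in> bin_op n f z w \<Longrightarrow> coord u 1 = f (coord z 1) (coord w 1)"
  by (auto simp: bin_op_def split: if_splits)

context
  fixes n :: nat and v :: "fm \<Rightarrow> bool list"
  assumes valuation: "valuation n v"
begin

lemma valuation_in_Bn: "v a \<in> Bn n"
  using valuation by (simp add: valuation_def)

lemma valuation_Neg_coord_1: "coord (v (Neg a)) 1 = coord (v a) 2"
  using valuation by (auto simp: valuation_def neg_op_def)

lemma valuation_Neg_coord_2: "coord (v (Neg a)) 2 \<Longrightarrow> coord (v a) 1"
  using valuation by (auto simp: valuation_def neg_op_def)

lemma valuation_And_coord_1: "coord (v (And a c)) 1 \<longleftrightarrow> coord (v a) 1 \<and> coord (v c) 1"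
  using valuation bin_op_coord_1[of "v (And a c)" n "(\<and>)"] by (simp add: valuation_def)

lemma valuation_Or_coord_1: "coord (v (Or a c)) 1 \<longleftrightarrow> coord (v a) 1 \<or> coord (v c) 1"
  using valuation bin_op_coord_1[of "v (Or a c)" n "(\<or>)"] by (simp add: valuation_def)

lemma valuation_Imp_coord_1: "coord (v (Imp a c)) 1 \<longleftrightarrow> (coord (v a) 1 \<longrightarrow> coord (v c) 1)"
  using valuation bin_op_coord_1[of "v (Imp a c)" n "(\<longrightarrow>)"] by (simp add: valuation_def)

lemma valuation_binary_Boo:
  assumes "v a \<in> Boo n" "v c \<in> Boo n"
  shows "v (And a c) \<in> Boo n" "v (Or a c) \<in> Boo n" "v (Imp a c) \<in> Boo n"
proof -
  have "v (And a c) \<in> bin_op n (\<and>) (v a) (v c)" "v (Or a c) \<in> bin_op n (\<or>) (v a) (v c)"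
    "v (Imp a c) \<in> bin_op n (\<longrightarrow>) (v a) (v c)"
    using valuation by (simp_all add: valuation_def)
  then show "v (And a c) \<in> Boo n" "v (Or a c) \<in> Boo n" "v (Imp a c) \<in> Boo n"
    using assms by (simp_all add: bin_op_def)
qed

lemma valuation_in_Boo_iff:
  assumes "n \<ge> 1"
  shows "v a \<in> Boo n \<longleftrightarrow> coord (v a) 1 \<noteq> coord (v (Neg a)) 1"
  using Bn_in_Boo_iff[OF valuation_in_Bn assms] valuation_Neg_coord_1 by simp

end

locale F_Cn_valuation =
  fixes n :: nat and v :: "fm \<Rightarrow> bool list"
  assumes n_ge_2: "n \<ge> 2" and in_F_Cn: "v \<in> F_Cn n"
begin

lemma valuation: "valuation n v"
  using in_F_Cn by (simp add: F_Cn_def)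

lemma n_ge_1: "n \<ge> 1"
  using n_ge_2 by simp

lemmas in_Bn = valuation_in_Bn[OF valuation]
  and Neg_coord_1 = valuation_Neg_coord_1[OF valuation]
  and in_Boo_iff = valuation_in_Boo_iff[OF valuation n_ge_1]

lemma pw_1: "pw a 1 = Neg (And a (Neg a))"
  by simp

lemma pw_1_of_Boo:
  assumes "v a \<in> Boo n"
  shows "v (pw a 1) = Tn n"
proof -
  have "\<not> coord (v (And a (Neg a))) 1"
    using assms in_Boo_iff valuation_And_coord_1[OF valuation] by auto
  then have F: "v (And a (Neg a)) = Fn n"
    using Bn_eq_Fn in_Bn by blast
  have "coord (v (pw a 1)) 1"
    using F Neg_coord_1 coord_Fn(2) n_ge_1 by simp
  moreover have "\<not> coord (v (pw a 1)) 2"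
    using F valuation_Neg_coord_2[OF valuation, of "And a (Neg a)"] coord_Fn(1) by auto
  ultimately show ?thesis
    using Bn_eq_Tn in_Bn n_ge_1 by blast
qed

lemma pw_1_of_tn_0:
  assumes "v a = tn n 0"
  shows "v (pw a 1) = Fn n"
proof -
  have "v (And a (Neg a)) = Tn n"
    using in_F_Cn assms by (simp add: F_Cn_def)
  then have "\<not> coord (v (pw a 1)) 1"
    using Neg_coord_1 coord_Tn(2) n_ge_1 by simp
  then show ?thesis
    using Bn_eq_Fn in_Bn by blast
qed

lemma pw_1_of_tn_Suc:
  assumes "v a = tn n (Suc k)" "Suc k \<le> n - 1"
  shows "v (pw a 1) = tn n k"
proof -
  have "\<forall>a k. 1 \<le> k \<and> k \<le> n - 1 \<and> v a = tn n k \<longrightarrow> v (pw a 1) = tn n (k - 1)"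
    using in_F_Cn by (simp add: F_Cn_def)
  from this[rule_format, where a = a and k = "Suc k"] show ?thesis
    using assms by simp
qed

lemma pw_in_Boo_or_tn: "v (pw a j) \<in> Boo n \<or> (\<exists>k. k + j \<le> n - 1 \<and> v (pw a j) = tn n k)"
proof (induction j)
  case 0
  show ?case
    using n_ge_2 by (cases rule: Bn_cases[OF in_Bn]) (auto simp: Boo_def)
next
  case (Suc j)
  have pw_Suc: "pw a (Suc j) = pw (pw a j) 1"
    by (simp add: pw_1)
  from Suc.IH show ?case
  proof (elim disjE exE conjE)
    assume "v (pw a j) \<in> Boo n"
    then show ?case
      using pw_1_of_Boo pw_Suc by (simp add: Boo_def)
  next
    fix k assume k: "k + j \<le> n - 1" "v (pw a j) = tn n k"
    show ?case
    proof (cases k)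
      case 0
      then show ?thesis
        using k pw_1_of_tn_0 pw_Suc by (simp add: Boo_def)
    next
      case (Suc l)
      then show ?thesis
        using k pw_1_of_tn_Suc[of "pw a j" l] pw_Suc by auto
    qed
  qed
qed

lemma pw_1_coord_2_iff: "coord (v (pw a 1)) 2 \<longleftrightarrow> v a \<notin> Boo n"
proof (cases "v a \<in> Boo n")
  case True
  then show ?thesis
    using pw_1_of_Boo coord_Tn n_ge_1 by simp
next
  case False
  then obtain k where k: "k \<le> n - 1" "v a = tn n k"
    using pw_in_Boo_or_tn[of a 0] by auto
  then have "v (pw a 1) = Fn n \<or> v (pw a 1) = tn n (k - 1)"
    using pw_1_of_tn_0 pw_1_of_tn_Suc by (cases k) auto
  then show ?thesis
    using False k coord_Fn coord_tn n_ge_2 n_ge_1 by auto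
qed

lemma satisfies_B7: "coord (v a) 1 = coord (v (Neg a)) 1 \<longleftrightarrow> coord (v (Neg (pw a 1))) 1"
  using pw_1_coord_2_iff in_Boo_iff Neg_coord_1 by simp

lemma satisfies_B6: "coord (v (pw a (n - 1))) 1 = coord (v (Neg (pw a (n - 1)))) 1
    \<longleftrightarrow> \<not> coord (v (pw a n)) 1"
proof -
  define b where "b = pw a (n - 1)"
  have pw_n: "pw a n = pw b 1"
    unfolding b_def using n_ge_2 by (cases n) (simp_all add: pw_1)
  have "v b \<in> Boo n \<or> v b = tn n 0"
    using pw_in_Boo_or_tn[of a "n - 1"] unfolding b_def by auto
  then have "coord (v (pw b 1)) 1 \<longleftrightarrow> v b \<in> Boo n"
  proof
    assume "v b \<in> Boo n"
    then show ?thesis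
      using pw_1_of_Boo coord_Tn(1) n_ge_1 by simp
  next
    assume "v b = tn n 0"
    then show ?thesis
      using pw_1_of_tn_0 coord_Fn(1) tn_notin_Boo n_ge_2 by simp
  qed
  then show ?thesis
    unfolding pw_n b_def[symmetric] using in_Boo_iff by simp
qed

lemma satisfies_B4: "\<not> coord (v a) 1 \<Longrightarrow> coord (v (Neg a)) 1"
  using Bn_coord_1_or_2[OF in_Bn n_ge_1] Neg_coord_1 by metis

lemma satisfies_B5: "coord (v (Neg (Neg a))) 1 \<Longrightarrow> coord (v a) 1"
  using valuation_Neg_coord_2[OF valuation] Neg_coord_1 by simp

lemma satisfies_B8:
  assumes "coord (v a) 1 \<noteq> coord (v (Neg a)) 1" "coord (v c) 1 \<noteq> coord (v (Neg c)) 1"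
  shows "coord (v (And a c)) 1 \<noteq> coord (v (Neg (And a c))) 1"
    and "coord (v (Or a c)) 1 \<noteq> coord (v (Neg (Or a c))) 1"
    and "coord (v (Imp a c)) 1 \<noteq> coord (v (Neg (Imp a c))) 1"
proof -
  have "v a \<in> Boo n" "v c \<in> Boo n"
    using assms in_Boo_iff by simp_all
  then show "coord (v (And a c)) 1 \<noteq> coord (v (Neg (And a c))) 1"
    and "coord (v (Or a c)) 1 \<noteq> coord (v (Neg (Or a c))) 1"
    and "coord (v (Imp a c)) 1 \<noteq> coord (v (Neg (Imp a c))) 1"
    using valuation_binary_Boo[OF valuation] in_Boo_iff by simp_all
qed

lemma cn_bivaluation: "cn_bivaluation n (\<lambda>a. coord (v a) 1)"
  unfolding cn_bivaluation_def
proof (intro conjI allI impI)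
  fix a c
  show "coord (v (And a c)) 1 \<longleftrightarrow> coord (v a) 1 \<and> coord (v c) 1"
    and "coord (v (Or a c)) 1 \<longleftrightarrow> coord (v a) 1 \<or> coord (v c) 1"
    and "coord (v (Imp a c)) 1 \<longleftrightarrow> \<not> coord (v a) 1 \<or> coord (v c) 1"
    using valuation_And_coord_1[OF valuation] valuation_Or_coord_1[OF valuation]
      valuation_Imp_coord_1[OF valuation] by simp_all
  show "\<not> coord (v a) 1 \<Longrightarrow> coord (v (Neg a)) 1"
    by (rule satisfies_B4)
  show "coord (v (Neg (Neg a))) 1 \<Longrightarrow> coord (v a) 1"
    by (rule satisfies_B5)
  show "(coord (v (pw a (n - 1))) 1 = coord (v (Neg (pw a (n - 1)))) 1) \<longleftrightarrow> \<not> coord (v (pw a n)) 1"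
    by (rule satisfies_B6)
  show "(coord (v a) 1 = coord (v (Neg a)) 1) \<longleftrightarrow> coord (v (Neg (pw a 1))) 1"
    by (rule satisfies_B7)
  assume "coord (v a) 1 \<noteq> coord (v (Neg a)) 1 \<and> coord (v c) 1 \<noteq> coord (v (Neg c)) 1"
  then show "coord (v (And a c)) 1 \<noteq> coord (v (Neg (And a c))) 1"
    and "coord (v (Or a c)) 1 \<noteq> coord (v (Neg (Or a c))) 1"
    and "coord (v (Imp a c)) 1 \<noteq> coord (v (Neg (Imp a c))) 1"
    using satisfies_B8 by blast+
qed

end

theorem mainTheorem11:
  fixes n :: nat and v :: "fm \<Rightarrow> bool list"
  assumes "n \<ge> 2" and "v \<in> F_Cn n"
  shows "cn_bivaluation n (\<lambda>a. coord (v a) 1) \<and> (\<forall>a. coord (v a) 1 \<longleftrightarrow> v a \<in> Dn n)"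
proof -
  interpret F_Cn_valuation n v
    using assms by unfold_locales
  show ?thesis
    using cn_bivaluation in_Bn by (simp add: Dn_def)
qed

end
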